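(* Let $0\le\mu<L<\infty$, $q=\mu/L$, $f\in\mathcal{F}_{\mu,L}(\mathbb{R}^d)$ with a minimizer $x_\star$ and $f_\star=f(x_\star)$, and let $k\ge 0$. For any $y_{k-1},z_k\in\mathbb{R}^d$ and any $A_k\ge 0$, define $x_k=y_{k-1}-\frac1L\nabla f(y_{k-1})$, $A_{k+1}=\frac{(1+q)A_k+2\left(1+\sqrt{(1+A_k)(1+qA_k)}\right)}{(1-q)^2}$, $\beta_k=\frac{A_k}{(1-q)A_{k+1}}$, $\delta_k=\frac12\frac{(1-q)^2A_{k+1}-(1+q)A_k}{1+q+qA_k}$, $y_k=(1-\beta_k)z_k+\beta_k x_k$, and $z_{k+1}=(1-q\delta_k)z_k+q\delta_k y_k-\frac{\delta_k}{L}\nabla f(y_k)$. Then $\phi_{k+1}\le\phi_k$, where for $j\in\{k,k+1\}$ \[ \phi_j=(1-q)A_j\left[f(y_{j-1})-f_\star-\tfrac{1}{2L}\|\nabla f(y_{j-1})\|^2-\tfrac{\mu}{2(1-\mu/L)}\|y_{j-1}-\tfrac1L\nabla f(y_{j-1})-x_\star\|^2\right]+(L+\mu A_j)\|z_j-x_\star\|^2 . \]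
   Context: $\mathcal{F}_{\mu,L}(\mathbb{R}^d)$ denotes the set of proper closed convex functions $f:\mathbb{R}^d\to\mathbb{R}$ such that for all $x,y$: $f(x)\le f(y)+\langle\nabla f(y);x-y\rangle+\frac L2\|x-y\|^2$ and $f(x)\ge f(y)+\langle\nabla f(y);x-y\rangle+\frac\mu2\|x-y\|^2$. *)

theory Defs
  imports "HOL-Analysis.Analysis"
begin

text \<open>The class F_{mu,L}(R^d): f is differentiable with gradient g (so g = nabla f),
  and satisfies the L-smoothness upper bound and the mu-strong convexity lower bound.
  (With mu >= 0 the lower bound gives convexity; a real-valued differentiable function
  on R^d is automatically proper and closed.)\<close>
definition in_F :: "real \<Rightarrow> real \<Rightarrow> ('a::euclidean_space \<Rightarrow> real) \<Rightarrow> ('a \<Rightarrow> 'a) \<Rightarrow> bool" where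
  "in_F \<mu> L f g \<longleftrightarrow>
     (\<forall>x. (f has_derivative (\<lambda>h. g x \<bullet> h)) (at x)) \<and>
     (\<forall>x y. f x \<le> f y + g y \<bullet> (x - y) + L / 2 * (norm (x - y))\<^sup>2) \<and>
     (\<forall>x y. f x \<ge> f y + g y \<bullet> (x - y) + \<mu> / 2 * (norm (x - y))\<^sup>2)"

text \<open>Potential phi_j, with arguments A = A_j, yp = y_{j-1}, z = z_j.\<close>
definition phi :: "real \<Rightarrow> real \<Rightarrow> ('a::euclidean_space \<Rightarrow> real) \<Rightarrow> ('a \<Rightarrow> 'a) \<Rightarrow> 'a
                   \<Rightarrow> real \<Rightarrow> 'a \<Rightarrow> 'a \<Rightarrow> real" where
  "phi \<mu> L f g xs A yp z =
     (1 - \<mu>/L) * A * (f yp - f xs - 1 / (2 * L) * (norm (g yp))\<^sup>2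
        - \<mu> / (2 * (1 - \<mu>/L)) * (norm (yp - (1/L) *\<^sub>R g yp - xs))\<^sup>2)
     + (L + \<mu> * A) * (norm (z - xs))\<^sup>2"

end

theory Submission
  imports Defs
begin

text \<open>Rescaling f and its gradient by 1/L reduces the claim to L = 1. There
  phi_k - phi_(k+1) equals (1-q) A_k times the slack of the F_(mu,L) interpolation inequality
  between y_(k-1) and y_k, plus (1-q) (A_(k+1) - A_k) times its slack between x_* and y_k (where
  the gradient vanishes), and both slacks are nonnegative. Everything else cancels exactly,
  because the step sizes satisfy (1-q) beta_k A_(k+1) = A_k,
  2 delta_k (1 + q A_(k+1)) = (1+q) A_(k+1) - A_k and delta_k^2 (1 + q A_(k+1)) = A_(k+1).\<close>

lemma in_F_interpolation:
  fixes f :: "'a::euclidean_space \<Rightarrow> real" and g :: "'a \<Rightarrow> 'a"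
  assumes "\<mu> < L" and F: "in_F \<mu> L f g"
  shows "f x \<ge> f y + g y \<bullet> (x - y) + \<mu>/2 * (norm (x - y))\<^sup>2
           + 1/(2*(L-\<mu>)) * (norm (g x - g y - \<mu> *\<^sub>R (x - y)))\<^sup>2"
proof -
  define D where "D = g x - g y - \<mu> *\<^sub>R (x - y)"
  define c where "c = 1/(L-\<mu>)"
  have c: "c * (L - \<mu>) = 1"
    unfolding c_def using \<open>\<mu> < L\<close> by simp
  \<comment> \<open>compare the upper bound at x with the lower bound at y at the point where their gap is smallest\<close>
  define w where "w = x - c *\<^sub>R D"
  have upper: "f w \<le> f x + g x \<bullet> (w - x) + L / 2 * (norm (w - x))\<^sup>2"
    and lower: "f w \<ge> f y + g y \<bullet> (w - y) + \<mu> / 2 * (norm (w - y))\<^sup>2"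
    using F unfolding in_F_def by blast+
  have "f x + g x \<bullet> (w - x) + L / 2 * (norm (w - x))\<^sup>2
          - (f y + g y \<bullet> (w - y) + \<mu> / 2 * (norm (w - y))\<^sup>2)
        = f x - (f y + g y \<bullet> (x - y) + \<mu>/2 * (norm (x - y))\<^sup>2 + c/2 * (norm D)\<^sup>2)"
    unfolding w_def D_def
    apply (simp only: power2_norm_eq_inner inner_simps)
    apply (simp add: inner_commute algebra_simps)
    using c by algebra
  moreover have "c/2 * (norm D)\<^sup>2 = 1/(2*(L-\<mu>)) * (norm D)\<^sup>2"
    unfolding c_def by simp
  ultimately show ?thesis
    using upper lower unfolding D_def by linarith
qed

lemma in_F_minimizer_gradient:
  assumes "in_F \<mu> L f g" and "\<forall>x. f x\<^sub>s \<le> f x"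
  shows "g x\<^sub>s = 0"
proof -
  have "(f has_derivative (\<lambda>h. g x\<^sub>s \<bullet> h)) (at x\<^sub>s)"
    using assms(1) unfolding in_F_def by blast
  then have "(\<lambda>h. g x\<^sub>s \<bullet> h) = (\<lambda>h. 0)"
    using assms(2) by (intro differential_zero_maxmin[of x\<^sub>s UNIV]) auto
  then show ?thesis
    by (metis inner_eq_zero_iff)
qed

lemma in_F_scale:
  assumes "0 < L" and "in_F \<mu> L f g"
  shows "in_F (\<mu>/L) 1 (\<lambda>x. f x / L) (\<lambda>x. g x /\<^sub>R L)"
proof -
  have "((\<lambda>x. f x / L) has_derivative (\<lambda>h. (g x /\<^sub>R L) \<bullet> h)) (at x)" for x
  proof -
    have "(f has_derivative (\<lambda>h. g x \<bullet> h)) (at x)"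
      using assms(2) unfolding in_F_def by blast
    from has_derivative_mult_left[OF this, of "inverse L"] show ?thesis
      by (simp add: divide_inverse_commute mult.commute)
  qed
  moreover have "f x / L \<le> f y / L + (g y /\<^sub>R L) \<bullet> (x - y) + 1/2 * (norm (x - y))\<^sup>2" for x y
  proof -
    have "f x \<le> f y + g y \<bullet> (x - y) + L / 2 * (norm (x - y))\<^sup>2"
      using assms(2) unfolding in_F_def by blast
    then show ?thesis
      using assms(1) by (simp add: field_simps)
  qed
  moreover have "f x / L \<ge> f y / L + (g y /\<^sub>R L) \<bullet> (x - y) + \<mu>/L/2 * (norm (x - y))\<^sup>2" for x y
  proof -
    have "f x \<ge> f y + g y \<bullet> (x - y) + \<mu> / 2 * (norm (x - y))\<^sup>2"
      using assms(2) unfolding in_F_def by blast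
    then have "(f y + g y \<bullet> (x - y) + \<mu> / 2 * (norm (x - y))\<^sup>2) / L \<le> f x / L"
      using assms(1) by (simp add: divide_right_mono)
    moreover have "(f y + g y \<bullet> (x - y) + \<mu> / 2 * (norm (x - y))\<^sup>2) / L
        = f y / L + (g y /\<^sub>R L) \<bullet> (x - y) + \<mu>/L/2 * (norm (x - y))\<^sup>2"
      by (simp add: add_divide_distrib inverse_eq_divide)
    ultimately show ?thesis
      by simp
  qed
  ultimately show ?thesis
    unfolding in_F_def by blast
qed

lemma phi_scale:
  assumes "0 < L"
  shows "phi \<mu> L f g x\<^sub>s A y z = L * phi (\<mu>/L) 1 (\<lambda>x. f x / L) (\<lambda>x. g x /\<^sub>R L) x\<^sub>s A y z"
  using assms by (simp add: phi_def field_simps power2_eq_square)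

lemma phi_unit_smoothness:
  assumes "q < 1"
  shows "phi q 1 f g x\<^sub>s A y z = (1 - q) * A * (f y - f x\<^sub>s) - (1 - q) * A / 2 * (norm (g y))\<^sup>2
    - q * A / 2 * (norm (y - g y - x\<^sub>s))\<^sup>2 + (1 + q * A) * (norm (z - x\<^sub>s))\<^sup>2"
  using assms by (simp add: phi_def field_simps)

lemma momentum_step_relations:
  fixes q A :: real
  assumes q: "0 \<le> q" "q < 1" and A: "0 \<le> A"
  defines "B \<equiv> ((1 + q) * A + 2 * (1 + sqrt ((1 + A) * (1 + q * A)))) / (1 - q)\<^sup>2"
  defines "\<beta> \<equiv> A / ((1 - q) * B)"
    and "\<delta> \<equiv> 1/2 * (((1 - q)\<^sup>2 * B - (1 + q) * A) / (1 + q + q * A))"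
  shows "A \<le> B" and "(1 - q) * \<beta> * B = A"
    and "2 * \<delta> * (1 + q * B) = (1 + q) * B - A" and "\<delta>\<^sup>2 * (1 + q * B) = B"
proof -
  define s where "s = sqrt ((1 + A) * (1 + q * A))"
  have s: "0 \<le> s" "s\<^sup>2 = (1 + A) * (1 + q * A)"
    unfolding s_def using q A by simp_all
  have B: "(1 - q)\<^sup>2 * B = (1 + q) * A + 2 + 2 * s"
    unfolding B_def s_def using q by simp
  have "(1 - q)\<^sup>2 \<le> 1 + q"
    using power_le_one[of "1 - q" 2] q by simp
  then have "(1 - q)\<^sup>2 * A \<le> (1 + q) * A"
    using A by (rule mult_right_mono)
  then have "(1 - q)\<^sup>2 * A \<le> (1 - q)\<^sup>2 * B"
    using B s by linarith
  then show "A \<le> B"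
    using q by simp
  have "0 \<le> (1 + q) * A"
    using q A by simp
  then have "0 < (1 - q)\<^sup>2 * B"
    using B s by linarith
  then have "0 < B"
    by (simp add: zero_less_mult_iff)
  then show "(1 - q) * \<beta> * B = A"
    unfolding \<beta>_def using q by simp
  have "0 < 1 + q + q * A"
    using q A by (simp add: add_pos_nonneg)
  then have \<delta>: "\<delta> * (1 + q + q * A) = 1 + s"
    unfolding \<delta>_def B by (simp add: field_simps)
  obtain u v where "(1 - q) * u = 1" and "(1 + q + q * A) * v = 1"
    using q \<open>0 < 1 + q + q * A\<close> by (metis less_irrefl right_inverse diff_gt_0_iff_gt)
  with s(2) B \<delta> show "2 * \<delta> * (1 + q * B) = (1 + q) * B - A" and "\<delta>\<^sup>2 * (1 + q * B) = B"
    unfolding power2_eq_square by algebra+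
qed

text \<open>With L = 1, e = z_k - x_*, w = x_k - x_*, p = grad f(y_(k-1)) and k = grad f(y_k), the
  vectors Y, Z, u are y_k - x_*, z_(k+1) - x_* and y_(k-1) - y_k, and the left-hand side is
  2 (phi_k - phi_(k+1)) minus the weighted interpolation slacks, function values cancelled.\<close>

lemma potential_identity:
  fixes e w p k :: "'a::real_inner" and q A B \<beta> \<delta> :: real
  assumes "(1 - q) * \<beta> * B = A" and "2 * \<delta> * (1 + q * B) = (1 + q) * B - A"
    and "\<delta>\<^sup>2 * (1 + q * B) = B"
  defines "Y \<equiv> (1 - \<beta>) *\<^sub>R e + \<beta> *\<^sub>R w"
  defines "Z \<equiv> (1 - q * \<delta>) *\<^sub>R e + (q * \<delta>) *\<^sub>R Y - \<delta> *\<^sub>R k" and "u \<equiv> w + p - Y"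
  shows "(1 - q) * B * (norm k)\<^sup>2 + q * B * (norm (Y - k))\<^sup>2 - 2 * (1 + q * B) * (norm Z)\<^sup>2
       - (1 - q) * A * (norm p)\<^sup>2 - q * A * (norm w)\<^sup>2 + 2 * (1 + q * A) * (norm e)\<^sup>2
       + (1 - q) * A * (2 * (k \<bullet> u) + q * (norm u)\<^sup>2) + A * (norm (p - k - q *\<^sub>R u))\<^sup>2
       - (1 - q) * (B - A) * (2 * (k \<bullet> Y) - q * (norm Y)\<^sup>2) + (B - A) * (norm (k - q *\<^sub>R Y))\<^sup>2
     = 0"
  unfolding Z_def u_def Y_def assms(1)[symmetric]
  apply (simp only: power2_norm_eq_inner inner_simps)
  apply (simp add: inner_commute algebra_simps)
  using assms(2,3) unfolding assms(1)[symmetric] by algebra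

lemma weighted_le_of_divide_le:
  fixes q c N s :: real
  assumes "q < 1" and "0 \<le> c" and "N / (2 * (1 - q)) \<le> s"
  shows "c / 2 * N \<le> (1 - q) * c * s"
proof -
  have "(1 - q) * c * (N / (2 * (1 - q))) \<le> (1 - q) * c * s"
    using assms by (intro mult_left_mono) simp_all
  moreover have "(1 - q) * c * (N / (2 * (1 - q))) = c / 2 * N"
    using assms(1) by (simp add: field_simps)
  ultimately show ?thesis
    by linarith
qed

lemma potential_decrease_unit_smoothness:
  fixes f :: "'a::euclidean_space \<Rightarrow> real" and g :: "'a \<Rightarrow> 'a" and x\<^sub>s y\<^sub>p z\<^sub>k :: 'a
  assumes q: "q < 1" and F: "in_F q 1 f g" and min: "\<forall>x. f x\<^sub>s \<le> f x"
    and A: "0 \<le> A" "A \<le> B"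
    and rel: "(1 - q) * \<beta> * B = A" "2 * \<delta> * (1 + q * B) = (1 + q) * B - A"
      "\<delta>\<^sup>2 * (1 + q * B) = B"
  defines "y\<^sub>k \<equiv> (1 - \<beta>) *\<^sub>R z\<^sub>k + \<beta> *\<^sub>R (y\<^sub>p - g y\<^sub>p)"
  defines "z\<^sub>k\<^sub>1 \<equiv> (1 - q * \<delta>) *\<^sub>R z\<^sub>k + (q * \<delta>) *\<^sub>R y\<^sub>k - \<delta> *\<^sub>R g y\<^sub>k"
  shows "phi q 1 f g x\<^sub>s B y\<^sub>k z\<^sub>k\<^sub>1 \<le> phi q 1 f g x\<^sub>s A y\<^sub>p z\<^sub>k"
proof -
  define e w p k where "e = z\<^sub>k - x\<^sub>s" and "w = y\<^sub>p - g y\<^sub>p - x\<^sub>s" and "p = g y\<^sub>p"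
    and "k = g y\<^sub>k"
  define Y Z u where "Y = (1 - \<beta>) *\<^sub>R e + \<beta> *\<^sub>R w"
    and "Z = (1 - q * \<delta>) *\<^sub>R e + (q * \<delta>) *\<^sub>R Y - \<delta> *\<^sub>R k" and "u = w + p - Y"
  have Y: "y\<^sub>k - x\<^sub>s = Y"
    unfolding Y_def y\<^sub>k_def e_def w_def by (simp add: algebra_simps)
  have Z: "z\<^sub>k\<^sub>1 - x\<^sub>s = Z"
    unfolding Z_def z\<^sub>k\<^sub>1_def Y[symmetric] e_def k_def by (simp add: algebra_simps)
  have u: "y\<^sub>p - y\<^sub>k = u"
    unfolding u_def Y[symmetric] w_def p_def by simp
  define gap\<^sub>1 gap\<^sub>2
    where "gap\<^sub>1 = f y\<^sub>p - f y\<^sub>k - k \<bullet> u - q/2 * (norm u)\<^sup>2"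
      and "gap\<^sub>2 = f x\<^sub>s - f y\<^sub>k + k \<bullet> Y - q/2 * (norm Y)\<^sup>2"
  have "(norm (p - k - q *\<^sub>R u))\<^sup>2 / (2*(1-q)) \<le> gap\<^sub>1"
    using in_F_interpolation[OF q F, where x = y\<^sub>p and y = y\<^sub>k]
    unfolding gap\<^sub>1_def u p_def k_def by simp
  with q A(1) have gap\<^sub>1: "A/2 * (norm (p - k - q *\<^sub>R u))\<^sup>2 \<le> (1 - q) * A * gap\<^sub>1"
    by (rule weighted_le_of_divide_le)
  have "g x\<^sub>s = 0"
    using F min by (rule in_F_minimizer_gradient)
  then have "(norm (k - q *\<^sub>R Y))\<^sup>2 / (2*(1-q)) \<le> gap\<^sub>2"
    using in_F_interpolation[OF q F, where x = x\<^sub>s and y = y\<^sub>k]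
    unfolding gap\<^sub>2_def k_def Y[symmetric] by (simp add: norm_minus_commute algebra_simps)
  with q A have gap\<^sub>2: "(B - A)/2 * (norm (k - q *\<^sub>R Y))\<^sup>2 \<le> (1 - q) * (B - A) * gap\<^sub>2"
    by (intro weighted_le_of_divide_le) simp_all
  have phi_A: "phi q 1 f g x\<^sub>s A y\<^sub>p z\<^sub>k = (1 - q) * A * (f y\<^sub>p - f x\<^sub>s)
      - (1 - q) * A / 2 * (norm p)\<^sup>2 - q * A / 2 * (norm w)\<^sup>2 + (1 + q * A) * (norm e)\<^sup>2"
    unfolding phi_unit_smoothness[OF q] e_def w_def p_def ..
  have Y_k: "y\<^sub>k - k - x\<^sub>s = Y - k"
    using Y by (simp add: algebra_simps)
  have phi_B: "phi q 1 f g x\<^sub>s B y\<^sub>k z\<^sub>k\<^sub>1 = (1 - q) * B * (f y\<^sub>k - f x\<^sub>s)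
      - (1 - q) * B / 2 * (norm k)\<^sup>2 - q * B / 2 * (norm (Y - k))\<^sup>2 + (1 + q * B) * (norm Z)\<^sup>2"
    unfolding phi_unit_smoothness[OF q] Z k_def[symmetric] Y_k ..
  note identity = potential_identity[OF rel, where e = e and w = w and p = p and k = k,
      folded Y_def, folded Z_def u_def]
  have "phi q 1 f g x\<^sub>s A y\<^sub>p z\<^sub>k - phi q 1 f g x\<^sub>s B y\<^sub>k z\<^sub>k\<^sub>1
      = (1 - q) * A * gap\<^sub>1 - A/2 * (norm (p - k - q *\<^sub>R u))\<^sup>2
        + ((1 - q) * (B - A) * gap\<^sub>2 - (B - A)/2 * (norm (k - q *\<^sub>R Y))\<^sup>2)"
    using identity unfolding phi_A phi_B gap\<^sub>1_def gap\<^sub>2_def by algebra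
  then show ?thesis
    using gap\<^sub>1 gap\<^sub>2 by linarith
qed

theorem lemma1:
  fixes f :: "'a::euclidean_space \<Rightarrow> real" and g :: "'a \<Rightarrow> 'a"
    and \<mu> L q A\<^sub>k :: real and x\<^sub>s y\<^sub>p z\<^sub>k :: 'a
  assumes "0 \<le> \<mu>" and "\<mu> < L"
    and "q = \<mu> / L"
    and "in_F \<mu> L f g"
    and "\<forall>x. f x\<^sub>s \<le> f x"
    and "0 \<le> A\<^sub>k"
  defines "x\<^sub>k \<equiv> y\<^sub>p - (1/L) *\<^sub>R g y\<^sub>p"
    and "A\<^sub>k\<^sub>1 \<equiv> ((1 + q) * A\<^sub>k + 2 * (1 + sqrt ((1 + A\<^sub>k) * (1 + q * A\<^sub>k)))) / (1 - q)\<^sup>2"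
  defines "\<beta> \<equiv> A\<^sub>k / ((1 - q) * A\<^sub>k\<^sub>1)"
    and "\<delta> \<equiv> 1/2 * (((1 - q)\<^sup>2 * A\<^sub>k\<^sub>1 - (1 + q) * A\<^sub>k) / (1 + q + q * A\<^sub>k))"
  defines "y\<^sub>k \<equiv> (1 - \<beta>) *\<^sub>R z\<^sub>k + \<beta> *\<^sub>R x\<^sub>k"
  defines "z\<^sub>k\<^sub>1 \<equiv> (1 - q * \<delta>) *\<^sub>R z\<^sub>k + (q * \<delta>) *\<^sub>R y\<^sub>k - (\<delta> / L) *\<^sub>R g y\<^sub>k"
  shows "phi \<mu> L f g x\<^sub>s A\<^sub>k\<^sub>1 y\<^sub>k z\<^sub>k\<^sub>1 \<le> phi \<mu> L f g x\<^sub>s A\<^sub>k y\<^sub>p z\<^sub>k"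
proof -
  have L: "0 < L"
    using assms(1,2) by linarith
  have q: "0 \<le> q" "q < 1"
    using assms(1-3) L by simp_all
  note rel = momentum_step_relations[OF q assms(6), folded A\<^sub>k\<^sub>1_def, folded \<beta>_def \<delta>_def]
  have F: "in_F q 1 (\<lambda>x. f x / L) (\<lambda>x. g x /\<^sub>R L)"
    using in_F_scale[OF L assms(4)] unfolding assms(3) .
  have min: "\<forall>x. f x\<^sub>s / L \<le> f x / L"
    using assms(5) L by (simp add: divide_right_mono)
  have "phi q 1 (\<lambda>x. f x / L) (\<lambda>x. g x /\<^sub>R L) x\<^sub>s A\<^sub>k\<^sub>1 y\<^sub>k z\<^sub>k\<^sub>1
      \<le> phi q 1 (\<lambda>x. f x / L) (\<lambda>x. g x /\<^sub>R L) x\<^sub>s A\<^sub>k y\<^sub>p z\<^sub>k"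
    using potential_decrease_unit_smoothness[OF q(2) F min assms(6) rel, of z\<^sub>k y\<^sub>p]
    unfolding z\<^sub>k\<^sub>1_def y\<^sub>k_def x\<^sub>k_def by (simp add: divide_inverse)
  then show ?thesis
    unfolding phi_scale[OF L, where \<mu> = \<mu>] assms(3)[symmetric] using L by simp
qed

end
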